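(* Let $X,Y$ be q-cycle sets and $p:X\to Y$ an epimorphism. If $X$ is irreducible, then $Y$ is irreducible.
   Context: A q-cycle set is a non-empty set $X$ with operations $\cdot,:$ such that each $y\mapsto x\cdot y$ is bijective and $(x\cdot y)\cdot(x\cdot z)=(y:x)\cdot(y\cdot z)$, $(x:y):(x:z)=(y\cdot x):(y:z)$, $(x\cdot y):(x\cdot z)=(y:x)\cdot(y:z)$ for all $x,y,z$. An epimorphism is a surjective map $p$ with $p(a\cdot b)=p(a)\cdot p(b)$ and $p(a:b)=p(a):p(b)$. A sub-q-cycle set is a subset that is a q-cycle set under the restricted operations (the empty set also counts); a q-cycle set is irreducible if $\emptyset$ and itself are its only sub-q-cycle sets. *)

theory Defs
  imports Main
begin

definition qcycle_set :: "'a set \<Rightarrow> ('a \<Rightarrow> 'a \<Rightarrow> 'a) \<Rightarrow> ('a \<Rightarrow> 'a \<Rightarrow> 'a) \<Rightarrow> bool" where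
  "qcycle_set X dot col \<longleftrightarrow>
     X \<noteq> {} \<and>
     (\<forall>x\<in>X. \<forall>y\<in>X. dot x y \<in> X \<and> col x y \<in> X) \<and>
     (\<forall>x\<in>X. bij_betw (dot x) X X) \<and>
     (\<forall>x\<in>X. \<forall>y\<in>X. \<forall>z\<in>X.
        dot (dot x y) (dot x z) = dot (col y x) (dot y z) \<and>
        col (col x y) (col x z) = col (dot y x) (col y z) \<and>
        col (dot x y) (dot x z) = dot (col y x) (col y z))"

definition sub_qcycle_set :: "'a set \<Rightarrow> 'a set \<Rightarrow> ('a \<Rightarrow> 'a \<Rightarrow> 'a) \<Rightarrow> ('a \<Rightarrow> 'a \<Rightarrow> 'a) \<Rightarrow> bool" where
  "sub_qcycle_set S X dot col \<longleftrightarrow> S \<subseteq> X \<and> (S = {} \<or> qcycle_set S dot col)"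

definition irreducible_qcycle_set :: "'a set \<Rightarrow> ('a \<Rightarrow> 'a \<Rightarrow> 'a) \<Rightarrow> ('a \<Rightarrow> 'a \<Rightarrow> 'a) \<Rightarrow> bool" where
  "irreducible_qcycle_set X dot col \<longleftrightarrow>
     qcycle_set X dot col \<and> (\<forall>S. sub_qcycle_set S X dot col \<longrightarrow> S = {} \<or> S = X)"

definition qcycle_epi ::
  "('a \<Rightarrow> 'b) \<Rightarrow> 'a set \<Rightarrow> ('a \<Rightarrow> 'a \<Rightarrow> 'a) \<Rightarrow> ('a \<Rightarrow> 'a \<Rightarrow> 'a)
     \<Rightarrow> 'b set \<Rightarrow> ('b \<Rightarrow> 'b \<Rightarrow> 'b) \<Rightarrow> ('b \<Rightarrow> 'b \<Rightarrow> 'b) \<Rightarrow> bool" where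
  "qcycle_epi p X dotX colX Y dotY colY \<longleftrightarrow>
     p ` X = Y \<and>
     (\<forall>a\<in>X. \<forall>b\<in>X. p (dotX a b) = dotY (p a) (p b) \<and> p (colX a b) = colY (p a) (p b))"

end

theory Submission
  imports Defs
begin

text \<open>The preimage of a sub-q-cycle set of Y under an epimorphism p is a sub-q-cycle set
  of X; for a nonempty one, irreducibility of X forces the preimage to be all of X, and
  surjectivity of p then gives the whole of Y.\<close>

lemma qcycle_set_closed_subset:
  assumes X: "qcycle_set X dot col" and "S \<subseteq> X" and "S \<noteq> {}"
    and closed: "\<forall>x\<in>S. \<forall>y\<in>S. dot x y \<in> S \<and> col x y \<in> S"
    and onto: "\<And>x. x \<in> S \<Longrightarrow> S \<subseteq> dot x ` S"
  shows "qcycle_set S dot col"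
proof -
  have "bij_betw (dot x) S S" if "x \<in> S" for x
  proof -
    have "inj_on (dot x) S"
      using X \<open>S \<subseteq> X\<close> \<open>x \<in> S\<close> unfolding qcycle_set_def
      by (meson bij_betw_imp_inj_on inj_on_subset subsetD)
    moreover have "dot x ` S = S" using closed onto \<open>x \<in> S\<close> by blast
    ultimately show ?thesis unfolding bij_betw_def by blast
  qed
  with assms show ?thesis unfolding qcycle_set_def by (simp add: subset_iff)
qed

lemma sub_qcycle_set_vimage:
  assumes X: "qcycle_set X dotX colX" and Y: "qcycle_set Y dotY colY"
    and epi: "qcycle_epi p X dotX colX Y dotY colY"
    and S: "sub_qcycle_set S Y dotY colY"
  shows "sub_qcycle_set (X \<inter> p -` S) X dotX colX"
proof (cases "S = {}")
  case False
  define T where "T = X \<inter> p -` S"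
  have SY: "S \<subseteq> Y" and Sq: "qcycle_set S dotY colY"
    using S False unfolding sub_qcycle_set_def by auto
  have pY: "p ` X = Y"
    and hom: "\<And>a b. a \<in> X \<Longrightarrow> b \<in> X \<Longrightarrow>
                p (dotX a b) = dotY (p a) (p b) \<and> p (colX a b) = colY (p a) (p b)"
    using epi unfolding qcycle_epi_def by auto
  have "T \<subseteq> X" unfolding T_def by blast
  moreover have "T \<noteq> {}" using False SY pY unfolding T_def by blast
  moreover have "\<forall>x\<in>T. \<forall>y\<in>T. dotX x y \<in> T \<and> colX x y \<in> T"
    using X Sq hom unfolding T_def qcycle_set_def by auto
  moreover have "T \<subseteq> dotX x ` T" if "x \<in> T" for x
  proof
    fix z assume "z \<in> T"
    have xX: "x \<in> X" and "p x \<in> S" "z \<in> X" "p z \<in> S"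
      using \<open>x \<in> T\<close> \<open>z \<in> T\<close> unfolding T_def by auto
    obtain w where wX: "w \<in> X" and z: "z = dotX x w"
      using X xX \<open>z \<in> X\<close> unfolding qcycle_set_def bij_betw_def by blast
    obtain s where "s \<in> S" and s: "p z = dotY (p x) s"
      using Sq \<open>p x \<in> S\<close> \<open>p z \<in> S\<close> unfolding qcycle_set_def bij_betw_def by blast
    have "p z = dotY (p x) (p w)" using hom[OF xX wX] z by simp
    \<comment> \<open>p w is not yet known to lie in S, so injectivity is needed on all of Y\<close>
    moreover have "inj_on (dotY (p x)) Y"
      using Y \<open>p x \<in> S\<close> SY unfolding qcycle_set_def bij_betw_def by blast
    ultimately have "p w = s"
      using s \<open>s \<in> S\<close> SY pY wX by (auto dest: inj_onD)
    with wX \<open>s \<in> S\<close> z show "z \<in> dotX x ` T" unfolding T_def by blast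
  qed
  ultimately have "qcycle_set T dotX colX"
    by (rule qcycle_set_closed_subset[OF X])
  then show ?thesis unfolding sub_qcycle_set_def T_def by blast
qed (simp add: sub_qcycle_set_def)

theorem mainTheorem15:
  fixes X :: "'a set" and dotX colX :: "'a \<Rightarrow> 'a \<Rightarrow> 'a"
    and Y :: "'b set" and dotY colY :: "'b \<Rightarrow> 'b \<Rightarrow> 'b"
    and p :: "'a \<Rightarrow> 'b"
  assumes "qcycle_set X dotX colX"
    and "qcycle_set Y dotY colY"
    and "qcycle_epi p X dotX colX Y dotY colY"
    and "irreducible_qcycle_set X dotX colX"
  shows "irreducible_qcycle_set Y dotY colY"
proof -
  have "S = {} \<or> S = Y" if S: "sub_qcycle_set S Y dotY colY" for S
  proof -
    have "sub_qcycle_set (X \<inter> p -` S) X dotX colX"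
      using sub_qcycle_set_vimage[OF assms(1-3) S] .
    then have "X \<inter> p -` S = {} \<or> X \<subseteq> p -` S"
      using assms(4) unfolding irreducible_qcycle_set_def by blast
    moreover have "p ` X = Y" using assms(3) unfolding qcycle_epi_def by blast
    moreover have "S \<subseteq> Y" using S unfolding sub_qcycle_set_def by blast
    ultimately show ?thesis by blast
  qed
  with assms(2) show ?thesis unfolding irreducible_qcycle_set_def by blast
qed

end
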